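(* Let $a,b$ be positive integers with $\gcd(a,b)=1$, let $r\ge1$, let $n>rab$, and let $\lambda$ be an $(a,b;n)$-balanced partition of $rn$. Let $k$ be an integer with $rab\le k\le n-1$ such that $k=rab+au+bv$ for some nonnegative integers $u,v$, and let $S_k=\{(i,j)\in\lambda: ai+bj\equiv k\pmod n\}$. Then $S_k$ is the disjoint union of two sets $A_k$ and $B_k$ such that: (1) if $(i,j)\in A_k$ then either $i<b$ or $(i-b,j+a)\in A_k$; (2) if $(i,j)\in B_k$ then either $j<a$ or $(i+b,j-a)\in B_k$.
   Context: Partitions are Young diagrams: finite sets $\lambda\subset\mathbb{Z}_{\ge0}^2$ such that $(i,j)\in\lambda$ implies $(i',j')\in\lambda$ for $0\le i'\le i$, $0\le j'\le j$. Box $(i,j)$ has color $ai+bj\bmod n$; $\lambda$ is $(a,b;n)$-balanced if each residue class mod $n$ is the color of exactly $r$ boxes of $\lambda$. *)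

theory Defs
  imports Main
begin

definition young_diagram :: "(nat \<times> nat) set \<Rightarrow> bool" where
  "young_diagram lam \<longleftrightarrow> finite lam \<and>
     (\<forall>i j i' j'. (i, j) \<in> lam \<and> i' \<le> i \<and> j' \<le> j \<longrightarrow> (i', j') \<in> lam)"

definition box_color :: "nat \<Rightarrow> nat \<Rightarrow> nat \<Rightarrow> nat \<times> nat \<Rightarrow> nat" where
  "box_color a b n c = (a * fst c + b * snd c) mod n"

definition balanced :: "nat \<Rightarrow> nat \<Rightarrow> nat \<Rightarrow> nat \<Rightarrow> (nat \<times> nat) set \<Rightarrow> bool" where
  "balanced a b n r lam \<longleftrightarrow>
     (\<forall>c < n. card {x \<in> lam. box_color a b n x = c} = r)"

end

theory Submission
  imports Defs
begin

text \<open>Moving a box by \<open>(-b, +a)\<close> or by \<open>(+b, -a)\<close> preserves its colour. Call the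
boxes reached by repeating the first move until the column index drops below \<open>b\<close> the left ray
of a box, and those reached by repeating the second move until the row index drops below \<open>a\<close>
its lower ray. Take \<open>A\<^sub>k\<close> to be the boxes of colour \<open>k\<close> whose left ray lies in \<open>\<lambda>\<close>
and \<open>B\<^sub>k\<close> the others; the closure properties are then immediate once every box of
colour \<open>k\<close> has its left or its lower ray in \<open>\<lambda>\<close>.

Suppose some box has neither. Send every box of colour \<open>k\<close> with complete lower ray \<open>b\<close>
steps left and every other box \<open>a\<close> steps down. This lowers the colour by \<open>ab\<close>, is injective,
and misses the box below the first gap in the left ray of the bad box, so colour \<open>k - ab\<close>
has more boxes than colour \<open>k\<close>, contradicting balancedness. The left move never leaves the
quadrant because of the representation \<open>k = rab + au + bv\<close>: a box of colour \<open>k\<close> in the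
first \<open>b\<close> columns lies in a row \<open>\<ge> ra\<close>, so a complete lower ray from it would contain
\<open>r + 1\<close> boxes of colour \<open>k\<close>.\<close>

definition left_ray :: "(nat \<times> nat) set \<Rightarrow> nat \<Rightarrow> nat \<Rightarrow> nat \<Rightarrow> nat \<Rightarrow> bool" where
  "left_ray lam a b i j \<longleftrightarrow> (\<forall>s. s * b \<le> i \<longrightarrow> (i - s * b, j + s * a) \<in> lam)"

definition lower_ray :: "(nat \<times> nat) set \<Rightarrow> nat \<Rightarrow> nat \<Rightarrow> nat \<Rightarrow> nat \<Rightarrow> bool" where
  "lower_ray lam a b i j \<longleftrightarrow> (\<forall>s. s * a \<le> j \<longrightarrow> (i + s * b, j - s * a) \<in> lam)"

definition color_class :: "nat \<Rightarrow> nat \<Rightarrow> nat \<Rightarrow> (nat \<times> nat) set \<Rightarrow> nat \<Rightarrow> (nat \<times> nat) set" where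
  "color_class a b n lam c = {x \<in> lam. box_color a b n x = c}"

lemma young_diagram_down_closed:
  "young_diagram lam \<Longrightarrow> (i, j) \<in> lam \<Longrightarrow> i' \<le> i \<Longrightarrow> j' \<le> j \<Longrightarrow> (i', j') \<in> lam"
  unfolding young_diagram_def by blast

lemma box_color_shift_lower:
  assumes "s * a \<le> j"
  shows "box_color a b n (i + s * b, j - s * a) = box_color a b n (i, j)"
proof -
  have "a * (i + s * b) + b * (j - s * a) = a * i + b * j"
    using assms by (simp add: algebra_simps diff_mult_distrib2)
  then show ?thesis by (simp add: box_color_def)
qed

lemma box_color_shift_left:
  assumes "s * b \<le> i"
  shows "box_color a b n (i - s * b, j + s * a) = box_color a b n (i, j)"
proof -
  have "a * (i - s * b) + b * (j + s * a) = a * i + b * j"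
    using assms by (simp add: algebra_simps diff_mult_distrib2)
  then show ?thesis by (simp add: box_color_def)
qed

lemma mod_diff_eq_of_le: "(w::nat) mod n = k \<Longrightarrow> c \<le> k \<Longrightarrow> (w - c) mod n = k - c"
proof -
  assume w: "w mod n = k" and c: "c \<le> k"
  have "w - c = (k - c) + n * (w div n)"
    using w c div_mult_mod_eq[of w n] by (metis add.commute add_diff_assoc2 mult.commute)
  moreover have "(k - c) mod n = k - c"
    using w mod_less_divisor[of n w] by (cases "n = 0") (auto simp: less_imp_diff_less)
  ultimately show ?thesis
    by simp
qed

lemma left_ray_shift:
  assumes "left_ray lam a b (i + t * b) j"
  shows "left_ray lam a b i (j + t * a)"
  unfolding left_ray_def
proof (intro allI impI)
  fix s
  assume "s * b \<le> i"
  then have "(s + t) * b \<le> i + t * b"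
    by (simp add: algebra_simps)
  then have "(i + t * b - (s + t) * b, j + (s + t) * a) \<in> lam"
    using assms unfolding left_ray_def by blast
  then show "(i - s * b, j + t * a + s * a) \<in> lam"
    by (simp add: algebra_simps)
qed

lemma lower_ray_shift:
  assumes "lower_ray lam a b i (j + t * a)"
  shows "lower_ray lam a b (i + t * b) j"
  unfolding lower_ray_def
proof (intro allI impI)
  fix s
  assume "s * a \<le> j"
  then have "(s + t) * a \<le> j + t * a"
    by (simp add: algebra_simps)
  then have "(i + (s + t) * b, j + t * a - (s + t) * a) \<in> lam"
    using assms unfolding lower_ray_def by blast
  then show "(i + t * b + s * b, j - s * a) \<in> lam"
    by (simp add: algebra_simps)
qed

lemma lower_ray_cons:
  assumes "(i, j + a) \<in> lam" and "lower_ray lam a b (i + b) j"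
  shows "lower_ray lam a b i (j + a)"
  unfolding lower_ray_def
proof (intro allI impI)
  fix s
  assume s: "s * a \<le> j + a"
  show "(i + s * b, j + a - s * a) \<in> lam"
  proof (cases s)
    case 0
    then show ?thesis using assms(1) by simp
  next
    case (Suc s')
    then have "s' * a \<le> j"
      using s by simp
    then have "(i + b + s' * b, j - s' * a) \<in> lam"
      using assms(2) unfolding lower_ray_def by blast
    then show ?thesis
      using Suc by (simp add: algebra_simps)
  qed
qed

lemma lower_ray_of_less:
  assumes "(i, j) \<in> lam" and "j < a"
  shows "lower_ray lam a b i j"
  unfolding lower_ray_def
proof (intro allI impI)
  fix s
  assume "s * a \<le> j"
  then have "s = 0"
    using assms(2) by (cases s) auto
  then show "(i + s * b, j - s * a) \<in> lam"
    using assms(1) by simp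
qed

lemma left_ray_exit:
  assumes "(i, j) \<in> lam" and "\<not> left_ray lam a b i j"
  obtains t where "(t + 1) * b \<le> i" and "(i - t * b, j + t * a) \<in> lam"
    and "(i - (t + 1) * b, j + (t + 1) * a) \<notin> lam"
proof -
  have "\<exists>t. (t + 1) * b \<le> i \<and> (i - t * b, j + t * a) \<in> lam \<and>
            (i - (t + 1) * b, j + (t + 1) * a) \<notin> lam"
  proof (rule ccontr)
    assume no_exit: "\<not> ?thesis"
    have "s * b \<le> i \<longrightarrow> (i - s * b, j + s * a) \<in> lam" for s
    proof (induction s)
      case 0
      then show ?case using assms(1) by simp
    next
      case (Suc s)
      then show ?case using no_exit by (auto intro: order_trans[rotated])
    qed
    then show False
      using assms(2) unfolding left_ray_def by blast
  qed
  then show ?thesis using that by blast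
qed

lemma coprime_representation_bound:
  fixes a b i j r u v :: nat
  assumes "coprime a b" and "a > 0" and "i < b"
    and "a * i + b * j = r * a * b + a * u + b * v"
  shows "r * a \<le> j"
proof (rule ccontr)
  assume "\<not> r * a \<le> j"
  then have "int j < int r * int a"
    by (metis not_le of_nat_less_iff of_nat_mult)
  then have pos: "int r * int a + int v - int j > 0"
    by linarith
  have eq: "int a * (int i - int u) = int b * (int r * int a + int v - int j)"
    using arg_cong[OF assms(4), of int] by (simp add: algebra_simps)
  then have "int a * (int i - int u) > 0"
    using pos assms(3) by simp
  then have "int i - int u > 0"
    using assms(2) by (simp add: zero_less_mult_iff)
  moreover have "int b dvd int i - int u"
    using eq assms(1) by (metis coprime_commute coprime_dvd_mult_right_iff coprime_int_iff dvd_triv_left)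
  ultimately have "int b \<le> int i - int u"
    by (simp add: zdvd_imp_le)
  then show False
    using assms(3) by linarith
qed

lemma row_bound_of_color:
  fixes a b n r u v i j :: nat
  assumes "coprime a b" and "a > 0" and "r \<ge> 1" and "r * a * b < n"
    and "k = r * a * b + a * u + b * v" and "k < n"
    and "i < b" and "(a * i + b * j) mod n = k"
  shows "r * a \<le> j"
proof (rule ccontr)
  assume "\<not> r * a \<le> j"
  then have "b * j < r * a * b"
    using assms(7) by (simp add: mult.commute)
  moreover have "a * i < a * b"
    using assms(2,7) by simp
  moreover have "a * b \<le> r * a * b"
    using assms(3) by simp
  ultimately have "a * i + b * j < n + k"
    using assms(4,5) by linarith
  moreover have quotient: "a * i + b * j = k + n * ((a * i + b * j) div n)"
    using assms(8) div_mult_mod_eq[of "a * i + b * j" n] by (simp add: mult.commute)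
  ultimately have "n * ((a * i + b * j) div n) < n * 1"
    by linarith
  then have "a * i + b * j = k"
    using quotient by simp
  then have "r * a \<le> j"
    using coprime_representation_bound[OF assms(1,2,7)] assms(5) by simp
  with \<open>\<not> r * a \<le> j\<close> show False ..
qed

lemma card_color_class_ge:
  assumes "finite lam" and "b > 0" and "lower_ray lam a b i j" and "m * a \<le> j"
  shows "m + 1 \<le> card (color_class a b n lam (box_color a b n (i, j)))"
proof -
  define f where "f s = (i + s * b, j - s * a)" for s
  have "inj_on f {0..m}"
    using assms(2) by (auto simp: inj_on_def f_def)
  moreover have "f ` {0..m} \<subseteq> color_class a b n lam (box_color a b n (i, j))"
  proof
    fix z
    assume "z \<in> f ` {0..m}"
    then obtain s where "s \<le> m" and z: "z = f s"
      by auto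
    then have "s * a \<le> j"
      using assms(4) by (meson le_trans mult_le_mono1)
    then show "z \<in> color_class a b n lam (box_color a b n (i, j))"
      using assms(3) box_color_shift_lower
      unfolding z f_def color_class_def lower_ray_def by auto
  qed
  moreover have "finite (color_class a b n lam (box_color a b n (i, j)))"
    using assms(1) by (simp add: color_class_def)
  ultimately show ?thesis
    using card_inj_on_le by fastforce
qed

lemma lower_ray_imp_column_ge:
  assumes "coprime a b" and "a > 0" and "r \<ge> 1" and "r * a * b < n"
    and "k = r * a * b + a * u + b * v" and "k < n"
    and "young_diagram lam" and "card (color_class a b n lam k) = r"
    and "(i, j) \<in> color_class a b n lam k" and "lower_ray lam a b i j"
  shows "b \<le> i"
proof (rule ccontr)
  assume "\<not> b \<le> i"
  then have "i < b" by simp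
  moreover have color: "box_color a b n (i, j) = k"
    using assms(9) by (simp add: color_class_def)
  ultimately have "r * a \<le> j"
    using row_bound_of_color[OF assms(1-6)] by (simp add: box_color_def)
  then have "r + 1 \<le> card (color_class a b n lam k)"
    using card_color_class_ge[of lam b a i j r n] \<open>i < b\<close> assms(7,10) color
    by (simp add: young_diagram_def)
  then show False
    using assms(8) by simp
qed

lemma box_color_left_step:
  assumes "b \<le> x" and "a * b \<le> box_color a b n (x, y)"
  shows "box_color a b n (x - b, y) = box_color a b n (x, y) - a * b"
proof -
  have "a * (x - b) + b * y = (a * x + b * y) - a * b"
    using assms(1) by (simp add: diff_mult_distrib2)
  then show ?thesis
    using mod_diff_eq_of_le assms(2) by (simp add: box_color_def)
qed

lemma box_color_down_step:
  assumes "a \<le> y" and "a * b \<le> box_color a b n (x, y)"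
  shows "box_color a b n (x, y - a) = box_color a b n (x, y) - a * b"
proof -
  have "a * x + b * (y - a) = (a * x + b * y) - a * b"
    using assms(1) by (simp add: diff_mult_distrib2 mult.commute)
  then show ?thesis
    using mod_diff_eq_of_le assms(2) by (simp add: box_color_def)
qed

definition color_drop :: "(nat \<times> nat) set \<Rightarrow> nat \<Rightarrow> nat \<Rightarrow> nat \<times> nat \<Rightarrow> nat \<times> nat" where
  "color_drop lam a b z =
     (if lower_ray lam a b (fst z) (snd z) then (fst z - b, snd z) else (fst z, snd z - a))"

lemma color_drop_mem:
  assumes "young_diagram lam" and "(x, y) \<in> color_class a b n lam k" and "a * b \<le> k"
    and "lower_ray lam a b x y \<Longrightarrow> b \<le> x"
  shows "color_drop lam a b (x, y) \<in> color_class a b n lam (k - a * b)"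
proof -
  have box: "(x, y) \<in> lam" and color: "box_color a b n (x, y) = k"
    using assms(2) by (simp_all add: color_class_def)
  show ?thesis
  proof (cases "lower_ray lam a b x y")
    case True
    then have "b \<le> x"
      using assms(4) by blast
    moreover have "(x - b, y) \<in> lam"
      using young_diagram_down_closed[OF assms(1) box] by simp
    ultimately show ?thesis
      using True box_color_left_step[of b x a n y] color assms(3)
      by (simp add: color_drop_def color_class_def)
  next
    case False
    then have "a \<le> y"
      using lower_ray_of_less[OF box] by (meson not_le)
    moreover have "(x, y - a) \<in> lam"
      using young_diagram_down_closed[OF assms(1) box] by simp
    ultimately show ?thesis
      using False box_color_down_step[of a y b n x] color assms(3)
      by (simp add: color_drop_def color_class_def)
  qed
qed

lemma inj_on_color_drop:
  assumes "D \<subseteq> lam" and column_ge: "\<And>x y. (x, y) \<in> D \<Longrightarrow> lower_ray lam a b x y \<Longrightarrow> b \<le> x"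
  shows "inj_on (color_drop lam a b) D"
proof -
  have row_ge: "a \<le> y" if "(x, y) \<in> D" and "\<not> lower_ray lam a b x y" for x y
    using that assms(1) lower_ray_of_less by (meson not_le subsetD)
  \<comment> \<open>A box with complete lower ray passes it on to the box \<open>(-b, +a)\<close> from it, so the
    two moves never collide.\<close>
  have mixed: False
    if "(x, y) \<in> D" "(x', y') \<in> D" "lower_ray lam a b x y" "\<not> lower_ray lam a b x' y'"
      "color_drop lam a b (x, y) = color_drop lam a b (x', y')" for x y x' y'
  proof -
    have "x = x' + b" and "y' = y + a"
      using that column_ge row_ge by (auto simp: color_drop_def)
    then have "lower_ray lam a b x' y'"
      using lower_ray_cons[of x' y a lam b] that(2,3) assms(1) by auto
    with that(4) show False ..
  qed
  show ?thesis
  proof (rule inj_onI)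
    fix z z'
    assume z: "z \<in> D" and z': "z' \<in> D"
      and eq: "color_drop lam a b z = color_drop lam a b z'"
    obtain x y x' y' where [simp]: "z = (x, y)" "z' = (x', y')"
      by fastforce
    show "z = z'"
    proof (cases "lower_ray lam a b x y"; cases "lower_ray lam a b x' y'")
      assume "lower_ray lam a b x y" "lower_ray lam a b x' y'"
      moreover have "b \<le> x" "b \<le> x'"
        using calculation column_ge z z' by auto
      moreover have "x - b = x' - b" "y = y'"
        using eq calculation(1,2) by (simp_all add: color_drop_def)
      ultimately show ?thesis
        by simp
    next
      assume "lower_ray lam a b x y" "\<not> lower_ray lam a b x' y'"
      then show ?thesis
        using mixed[of x y x' y'] eq z z' by simp
    next
      assume "\<not> lower_ray lam a b x y" "lower_ray lam a b x' y'"
      then show ?thesis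
        using mixed[of x' y' x y] eq z z' by simp
    next
      assume "\<not> lower_ray lam a b x y" "\<not> lower_ray lam a b x' y'"
      moreover have "a \<le> y" "a \<le> y'"
        using calculation row_ge z z' by auto
      moreover have "x = x'" "y - a = y' - a"
        using eq calculation(1,2) by (simp_all add: color_drop_def)
      ultimately show ?thesis
        by simp
    qed
  qed
qed

lemma color_drop_image_misses:
  assumes young: "young_diagram lam" and "D \<subseteq> lam"
    and column_ge: "\<And>x y. (x, y) \<in> D \<Longrightarrow> lower_ray lam a b x y \<Longrightarrow> b \<le> x"
    and "(i, j) \<in> color_class a b n lam k" and "a * b \<le> k"
    and "\<not> left_ray lam a b i j" and "\<not> lower_ray lam a b i j"
  shows "\<exists>z \<in> color_class a b n lam (k - a * b). z \<notin> color_drop lam a b ` D"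
proof -
  have box: "(i, j) \<in> lam" and color: "box_color a b n (i, j) = k"
    using assms(4) by (simp_all add: color_class_def)
  obtain t where t_le: "(t + 1) * b \<le> i" and on_ray: "(i - t * b, j + t * a) \<in> lam"
    and gap: "(i - (t + 1) * b, j + (t + 1) * a) \<notin> lam"
    using left_ray_exit[OF box assms(6)] .
  \<comment> \<open>The witness \<open>(p - b, q)\<close> lies directly below the gap \<open>(p - b, q + a)\<close>.\<close>
  define p q where "p = i - t * b" and "q = j + t * a"
  have "b \<le> p"
    using t_le by (simp add: p_def algebra_simps)
  have "(p - b, q) \<in> lam"
    using young_diagram_down_closed[OF young on_ray] by (simp add: p_def q_def)
  moreover have "box_color a b n (p, q) = k"
    using box_color_shift_left[of t b i a n j] t_le color by (simp add: p_def q_def)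
  then have "box_color a b n (p - b, q) = k - a * b"
    using box_color_left_step[OF \<open>b \<le> p\<close>] assms(5) by simp
  moreover have "(p - b, q) \<notin> color_drop lam a b ` D"
  proof
    assume "(p - b, q) \<in> color_drop lam a b ` D"
    then obtain x y where xy: "(x, y) \<in> D" and drop: "color_drop lam a b (x, y) = (p - b, q)"
      by auto
    show False
    proof (cases "lower_ray lam a b x y")
      case True
      then have "x = p" and "y = q"
        using drop column_ge[OF xy] \<open>b \<le> p\<close> by (auto simp: color_drop_def)
      then have "lower_ray lam a b (i - t * b) (j + t * a)"
        using True by (simp add: p_def q_def)
      then have "lower_ray lam a b i j"
        using lower_ray_shift[of lam a b "i - t * b" j t] t_le by simp
      with assms(7) show False ..
    next
      case False
      then have "a \<le> y"
        using lower_ray_of_less xy assms(2) by (meson not_le subsetD)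
      then have "x = i - (t + 1) * b" and "y = j + (t + 1) * a"
        using drop False by (auto simp: color_drop_def p_def q_def)
      then show False
        using gap xy assms(2) by auto
    qed
  qed
  ultimately show ?thesis
    by (auto simp: color_class_def)
qed

lemma card_color_class_less:
  assumes "young_diagram lam" and "a * b \<le> k"
    and column_ge: "\<And>x y. (x, y) \<in> color_class a b n lam k \<Longrightarrow> lower_ray lam a b x y \<Longrightarrow> b \<le> x"
    and "(i, j) \<in> color_class a b n lam k"
    and "\<not> left_ray lam a b i j" and "\<not> lower_ray lam a b i j"
  shows "card (color_class a b n lam k) < card (color_class a b n lam (k - a * b))"
proof -
  let ?S = "color_class a b n lam k" and ?T = "color_class a b n lam (k - a * b)"
  have sub: "?S \<subseteq> lam"
    by (auto simp: color_class_def)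
  have "color_drop lam a b ` ?S \<subseteq> ?T"
    using color_drop_mem[OF assms(1) _ assms(2)] column_ge by auto
  moreover have "\<exists>z \<in> ?T. z \<notin> color_drop lam a b ` ?S"
    using color_drop_image_misses[OF assms(1) sub column_ge assms(4,2,5,6)] .
  ultimately have "color_drop lam a b ` ?S \<subset> ?T"
    by blast
  moreover have "finite ?T"
    using assms(1) by (simp add: young_diagram_def color_class_def)
  ultimately have "card (color_drop lam a b ` ?S) < card ?T"
    by (rule psubset_card_mono[rotated])
  moreover have "card (color_drop lam a b ` ?S) = card ?S"
    using card_image[OF inj_on_color_drop[OF sub column_ge]] .
  ultimately show ?thesis
    by simp
qed

lemma left_ray_or_lower_ray:
  assumes "coprime a b" and "a > 0" and "r \<ge> 1" and "r * a * b < n"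
    and "k = r * a * b + a * u + b * v" and "k < n"
    and "young_diagram lam" and "balanced a b n r lam"
    and "(i, j) \<in> color_class a b n lam k"
  shows "left_ray lam a b i j \<or> lower_ray lam a b i j"
proof (rule ccontr)
  assume neither: "\<not> ?thesis"
  have "a * b \<le> k"
    using assms(3,5) by (metis le_add1 le_trans mult_le_mono1 nat_mult_1)
  have card_class: "card (color_class a b n lam c) = r" if "c < n" for c
    using assms(8) that by (simp add: balanced_def color_class_def)
  have "card (color_class a b n lam k) < card (color_class a b n lam (k - a * b))"
    using card_color_class_less[OF assms(7) \<open>a * b \<le> k\<close> _ assms(9)] neither
      lower_ray_imp_column_ge[OF assms(1-7) card_class[OF assms(6)]] by blast
  moreover have "k - a * b < n"
    using assms(6) by linarith
  ultimately show False
    using card_class assms(6) by simp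
qed

lemma left_ray_step:
  assumes "(i, j) \<in> color_class a b n lam k" and "left_ray lam a b i j" and "b \<le> i"
  shows "(i - b, j + a) \<in> color_class a b n lam k \<and> left_ray lam a b (i - b) (j + a)"
proof -
  have "1 * b \<le> i"
    using assms(3) by simp
  then have "(i - 1 * b, j + 1 * a) \<in> lam"
    using assms(2) unfolding left_ray_def by blast
  moreover have "box_color a b n (i - 1 * b, j + 1 * a) = box_color a b n (i, j)"
    using box_color_shift_left \<open>1 * b \<le> i\<close> .
  moreover have "left_ray lam a b (i - b) (j + 1 * a)"
    using left_ray_shift[of lam a b "i - b" 1 j] assms(2,3) by simp
  ultimately show ?thesis
    using assms(1) by (simp add: color_class_def)
qed

lemma not_left_ray_step:
  assumes "(i, j) \<in> color_class a b n lam k" and "lower_ray lam a b i j"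
    and "\<not> left_ray lam a b i j" and "a \<le> j"
  shows "(i + b, j - a) \<in> color_class a b n lam k \<and> \<not> left_ray lam a b (i + b) (j - a)"
proof -
  have "1 * a \<le> j"
    using assms(4) by simp
  then have "(i + 1 * b, j - 1 * a) \<in> lam"
    using assms(2) unfolding lower_ray_def by blast
  moreover have "box_color a b n (i + 1 * b, j - 1 * a) = box_color a b n (i, j)"
    using box_color_shift_lower \<open>1 * a \<le> j\<close> .
  moreover have "\<not> left_ray lam a b (i + 1 * b) (j - a)"
    using left_ray_shift[of lam a b i 1 "j - a"] assms(3,4) by auto
  ultimately show ?thesis
    using assms(1) by (simp add: color_class_def)
qed

theorem lemma4p1:
  fixes a b r n k :: nat and lam :: "(nat \<times> nat) set"
  assumes "a > 0" and "b > 0" and "gcd a b = 1"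
    and "r \<ge> 1" and "n > r * a * b"
    and "young_diagram lam" and "card lam = r * n" and "balanced a b n r lam"
    and "r * a * b \<le> k" and "k \<le> n - 1"
    and "\<exists>u v. k = r * a * b + a * u + b * v"
  shows "\<exists>A B. A \<inter> B = {} \<and> A \<union> B = {x \<in> lam. box_color a b n x = k mod n} \<and>
           (\<forall>i j. (i, j) \<in> A \<longrightarrow> i < b \<or> (i - b, j + a) \<in> A) \<and>
           (\<forall>i j. (i, j) \<in> B \<longrightarrow> j < a \<or> (i + b, j - a) \<in> B)"
proof -
  obtain u v where k: "k = r * a * b + a * u + b * v"
    using assms(11) by blast
  have "k < n"
    using assms(5,10) by linarith
  let ?S = "color_class a b n lam k"
  define A where "A = {z \<in> ?S. left_ray lam a b (fst z) (snd z)}"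
  define B where "B = ?S - A"
  have "lower_ray lam a b i j" if "(i, j) \<in> B" for i j
    using left_ray_or_lower_ray[OF _ assms(1,4,5) k \<open>k < n\<close> assms(6,8), of i j] that assms(3)
    by (auto simp: A_def B_def coprime_iff_gcd_eq_1)
  then have B_closed: "j < a \<or> (i + b, j - a) \<in> B" if "(i, j) \<in> B" for i j
    using not_left_ray_step[of i j a b n lam k] that by (auto simp: A_def B_def)
  have A_closed: "i < b \<or> (i - b, j + a) \<in> A" if "(i, j) \<in> A" for i j
    using left_ray_step[of i j a b n lam k] that by (auto simp: A_def)
  have "A \<inter> B = {}" and "A \<union> B = {x \<in> lam. box_color a b n x = k mod n}"
    using \<open>k < n\<close> by (auto simp: A_def B_def color_class_def)
  then show ?thesis
    using A_closed B_closed by blast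
qed

end
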